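(* Let $G$ be a finite, connected, simple, bridgeless, triangle-free cubic graph, and let $\Lambda$ be a valid labeling of $\mathfrak{L}_2(G)$. Let $\mathfrak{G}_\Lambda$ be the graph with vertex set $\Gamma_\Lambda$ in which $\gamma,\phi\in\Gamma_\Lambda$ are joined by a single edge (a loop if $\gamma=\phi$) if and only if $\gamma$ and $\phi$ are adjacent. Then $\mathfrak{G}_\Lambda$ is a connected graph, simple apart from possible loops.
   Context: $\mathcal{L}(H)$ is the line graph of $H$. Let $\mathcal{T}$ be the set of triangles of $\mathcal{L}(\mathcal{L}(G))$ formed by the three edges of a triangle of $\mathcal{L}(G)$. $\mathfrak{L}_2(G)$ has the vertex set of $\mathcal{L}(\mathcal{L}(G))$ and the edges of $\mathcal{L}(\mathcal{L}(G))$ not in any triangle of $\mathcal{T}$. For each edge $e$ of $G$, the reduced clique $\mathbb{X}_e$ is the subgraph of $\mathfrak{L}_2(G)$ on the four edges of $\mathcal{L}(G)$ incident to $e$, with all edges of $\mathfrak{L}_2(G)$ among them (a 4-cycle); $\mathcal{X}$ is the set of reduced cliques. A labeling $\Lambda$ gives each edge of $\mathfrak{L}_2(G)$ a label in $\{0,1\}$ ($1$ = open); it is valid if in every reduced clique each vertex is incident to two edges of that clique with different labels. $\Gamma_\Lambda$ is the set of connected components (cycles) of the subgraph formed by the open edges. Two cycles $\gamma_1,\gamma_2\in\Gamma_\Lambda$ are adjacent if there is a reduced clique $\mathbb{X}\in\mathcal{X}$ containing an edge of $\gamma_1$ and an edge of $\gamma_2$. *)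

theory Defs
  imports Main
begin

definition simple_graph :: "'a set \<Rightarrow> 'a set set \<Rightarrow> bool" where
  "simple_graph V E \<longleftrightarrow> finite V \<and>
     E \<subseteq> {{u, v} | u v. u \<in> V \<and> v \<in> V \<and> u \<noteq> v}"

definition graph_adj :: "'a set set \<Rightarrow> ('a \<times> 'a) set" where
  "graph_adj E = {(u, v). {u, v} \<in> E}"

definition graph_connected :: "'a set \<Rightarrow> 'a set set \<Rightarrow> bool" where
  "graph_connected V E \<longleftrightarrow> V \<noteq> {} \<and>
     (\<forall>u\<in>V. \<forall>v\<in>V. (u, v) \<in> (graph_adj E)\<^sup>*)"

definition bridgeless :: "'a set \<Rightarrow> 'a set set \<Rightarrow> bool" where
  "bridgeless V E \<longleftrightarrow> (\<forall>e\<in>E. graph_connected V (E - {e}))"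

definition cubic :: "'a set \<Rightarrow> 'a set set \<Rightarrow> bool" where
  "cubic V E \<longleftrightarrow> (\<forall>v\<in>V. card {e\<in>E. v \<in> e} = 3)"

definition triangle_free :: "'a set set \<Rightarrow> bool" where
  "triangle_free E \<longleftrightarrow> \<not> (\<exists>u v w. {u, v} \<in> E \<and> {v, w} \<in> E \<and> {u, w} \<in> E)"

text \<open>The line graph of a graph with edge set E has vertex set E and edge set
  \<open>line_edges E\<close>: two distinct edges are adjacent iff they share an endpoint.\<close>

definition line_edges :: "'v set set \<Rightarrow> 'v set set set" where
  "line_edges E = {{e, f} | e f. e \<in> E \<and> f \<in> E \<and> e \<noteq> f \<and> e \<inter> f \<noteq> {}}"

definition LG_triangles :: "'a set set \<Rightarrow> 'a set set set" where
  "LG_triangles E = {{x, y, z} | x y z. x \<noteq> y \<and> y \<noteq> z \<and> x \<noteq> z \<and>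
      {x, y} \<in> line_edges E \<and> {y, z} \<in> line_edges E \<and> {x, z} \<in> line_edges E}"

text \<open>The set T: triangles of L(L(G)) formed by the three edges of a triangle of L(G),
  each given by its set of (three) edges in L(L(G)).\<close>

definition T_triangle_edges :: "'a set set \<Rightarrow> 'a set set set set set" where
  "T_triangle_edges E = {{{{x, y}, {y, z}}, {{y, z}, {x, z}}, {{x, y}, {x, z}}} | x y z.
      {x, y, z} \<in> LG_triangles E \<and> x \<noteq> y \<and> y \<noteq> z \<and> x \<noteq> z}"

text \<open>Edges of \<open>\<frakL>\<^sub>2(G)\<close>: edges of L(L(G)) not in any triangle of T.
  Its vertex set is the vertex set of L(L(G)), i.e. \<open>line_edges E\<close>.\<close>

definition L2_edges :: "'a set set \<Rightarrow> 'a set set set set" where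
  "L2_edges E = {q \<in> line_edges (line_edges E). \<not> (\<exists>t \<in> T_triangle_edges E. q \<in> t)}"

definition rc_verts :: "'a set set \<Rightarrow> 'a set \<Rightarrow> 'a set set set" where
  "rc_verts E e = {p \<in> line_edges E. e \<in> p}"

definition rc_edges :: "'a set set \<Rightarrow> 'a set \<Rightarrow> 'a set set set set" where
  "rc_edges E e = {q \<in> L2_edges E. q \<subseteq> rc_verts E e}"

definition labeling :: "'a set set \<Rightarrow> ('a set set set \<Rightarrow> nat) \<Rightarrow> bool" where
  "labeling E \<Lambda> \<longleftrightarrow> (\<forall>q \<in> L2_edges E. \<Lambda> q \<in> {0, 1})"

definition valid_labeling :: "'a set set \<Rightarrow> ('a set set set \<Rightarrow> nat) \<Rightarrow> bool" where
  "valid_labeling E \<Lambda> \<longleftrightarrow> labeling E \<Lambda> \<and>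
     (\<forall>e \<in> E. \<forall>v \<in> rc_verts E e. \<exists>q1 \<in> rc_edges E e. \<exists>q2 \<in> rc_edges E e.
         v \<in> q1 \<and> v \<in> q2 \<and> \<Lambda> q1 \<noteq> \<Lambda> q2)"

definition open_edges :: "'a set set \<Rightarrow> ('a set set set \<Rightarrow> nat) \<Rightarrow> 'a set set set set" where
  "open_edges E \<Lambda> = {q \<in> L2_edges E. \<Lambda> q = 1}"

text \<open>Connected components of the subgraph formed by the open edges, each component
  represented by its set of (open) edges.\<close>

definition open_touch :: "'a set set \<Rightarrow> ('a set set set \<Rightarrow> nat) \<Rightarrow>
    ('a set set set \<times> 'a set set set) set" where
  "open_touch E \<Lambda> = {(q, q'). q \<in> open_edges E \<Lambda> \<and> q' \<in> open_edges E \<Lambda> \<and> q \<inter> q' \<noteq> {}}"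

definition cycles :: "'a set set \<Rightarrow> ('a set set set \<Rightarrow> nat) \<Rightarrow> 'a set set set set set" where
  "cycles E \<Lambda> = {{q' \<in> open_edges E \<Lambda>. (q, q') \<in> (open_touch E \<Lambda>)\<^sup>*} | q. q \<in> open_edges E \<Lambda>}"

definition cycles_adjacent :: "'a set set \<Rightarrow> 'a set set set set \<Rightarrow> 'a set set set set \<Rightarrow> bool" where
  "cycles_adjacent E \<gamma>1 \<gamma>2 \<longleftrightarrow>
     (\<exists>e \<in> E. (\<exists>q1 \<in> \<gamma>1. q1 \<in> rc_edges E e) \<and> (\<exists>q2 \<in> \<gamma>2. q2 \<in> rc_edges E e))"

text \<open>Edge relation of the cycle graph \<open>\<frakG>\<^sub>\<Lambda>\<close> (one edge per adjacent pair, loops allowed).\<close>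

definition cycle_graph_rel :: "'a set set \<Rightarrow> ('a set set set \<Rightarrow> nat) \<Rightarrow>
    ('a set set set set \<times> 'a set set set set) set" where
  "cycle_graph_rel E \<Lambda> = {(\<gamma>, \<phi>). \<gamma> \<in> cycles E \<Lambda> \<and> \<phi> \<in> cycles E \<Lambda> \<and> cycles_adjacent E \<gamma> \<phi>}"

end

theory Submission
  imports Defs
begin

text \<open>Every open cycle uses an edge of some reduced clique \<open>\<bbbX>\<^sub>e\<close>, and any two cycles meeting
  the same \<open>\<bbbX>\<^sub>e\<close> are adjacent. If the edges \<open>e\<close> and \<open>f\<close> of \<open>G\<close> share an endpoint, the vertex
  \<open>{e, f}\<close> of \<open>\<frakL>\<^sub>2(G)\<close> lies in both \<open>\<bbbX>\<^sub>e\<close> and \<open>\<bbbX>\<^sub>f\<close>; validity gives it an open edge in each,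
  and these two open edges touch, so one cycle meets both cliques. Connectivity of \<open>G\<close> makes its
  line graph connected, and walking along the line graph chains these adjacencies together.\<close>

definition cycle_of :: "'a set set \<Rightarrow> ('a set set set \<Rightarrow> nat) \<Rightarrow> 'a set set set \<Rightarrow> 'a set set set set" where
  "cycle_of E \<Lambda> q = {q' \<in> open_edges E \<Lambda>. (q, q') \<in> (open_touch E \<Lambda>)\<^sup>*}"

definition cycles_meeting :: "'a set set \<Rightarrow> ('a set set set \<Rightarrow> nat) \<Rightarrow> 'a set \<Rightarrow> 'a set set set set set" where
  "cycles_meeting E \<Lambda> e = {\<gamma> \<in> cycles E \<Lambda>. \<gamma> \<inter> rc_edges E e \<noteq> {}}"

lemma cycles_eq_image_cycle_of: "cycles E \<Lambda> = cycle_of E \<Lambda> ` open_edges E \<Lambda>"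
  unfolding cycles_def cycle_of_def by blast

lemma cycle_of_self: "q \<in> open_edges E \<Lambda> \<Longrightarrow> q \<in> cycle_of E \<Lambda> q"
  unfolding cycle_of_def by blast

lemma cycle_of_touch: "(q, q') \<in> open_touch E \<Lambda> \<Longrightarrow> q' \<in> cycle_of E \<Lambda> q"
  unfolding cycle_of_def open_touch_def by auto

lemma graph_adj_line_edges_iff:
  "(e, f) \<in> graph_adj (line_edges E) \<longleftrightarrow> e \<in> E \<and> f \<in> E \<and> e \<noteq> f \<and> e \<inter> f \<noteq> {}"
  unfolding graph_adj_def line_edges_def by (auto simp: doubleton_eq_iff)

lemma line_reachable_if_meet:
  assumes "e \<in> E" "f \<in> E" "e \<inter> f \<noteq> {}"
  shows "(e, f) \<in> (graph_adj (line_edges E))\<^sup>*"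
proof (cases "e = f")
  case False
  then have "(e, f) \<in> graph_adj (line_edges E)" using assms graph_adj_line_edges_iff by blast
  then show ?thesis by blast
qed simp

lemma line_reachable_if_reachable:
  assumes "(u, w) \<in> (graph_adj E)\<^sup>*" "u \<in> e" "e \<in> E" "w \<in> f" "f \<in> E"
  shows "(e, f) \<in> (graph_adj (line_edges E))\<^sup>*"
  using assms(1,4,5)
proof (induction arbitrary: f rule: rtrancl_induct)
  case base
  then show ?case using assms(2,3) by (blast intro: line_reachable_if_meet)
next
  case (step v w)
  have vw: "{v, w} \<in> E" using step.hyps(2) unfolding graph_adj_def by simp
  then have "(e, {v, w}) \<in> (graph_adj (line_edges E))\<^sup>*" by (simp add: step.IH)
  moreover have "({v, w}, f) \<in> (graph_adj (line_edges E))\<^sup>*"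
    using line_reachable_if_meet[OF vw step.prems(2)] step.prems(1) by blast
  ultimately show ?case by (rule rtrancl_trans)
qed

lemma line_graph_connected:
  assumes "simple_graph V E" "graph_connected V E" "e \<in> E" "f \<in> E"
  shows "(e, f) \<in> (graph_adj (line_edges E))\<^sup>*"
proof -
  have E: "E \<subseteq> {{u, v} | u v. u \<in> V \<and> v \<in> V \<and> u \<noteq> v}"
    using assms(1) unfolding simple_graph_def by simp
  obtain u u' where "e = {u, u'}" "u \<in> V" using subsetD[OF E assms(3)] by blast
  moreover obtain w w' where "f = {w, w'}" "w \<in> V" using subsetD[OF E assms(4)] by blast
  ultimately have "u \<in> e" "u \<in> V" "w \<in> f" "w \<in> V" by simp_all
  then have "(u, w) \<in> (graph_adj E)\<^sup>*" using assms(2) unfolding graph_connected_def by blast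
  then show ?thesis using line_reachable_if_reachable \<open>u \<in> e\<close> \<open>w \<in> f\<close> assms(3,4) by metis
qed

lemma cubic_line_edges_nonempty:
  assumes "cubic V E" "V \<noteq> {}"
  shows "line_edges E \<noteq> {}"
proof -
  obtain v where "v \<in> V" using assms(2) by blast
  then have "card {e \<in> E. v \<in> e} = 3" using assms(1) unfolding cubic_def by blast
  then have "2 \<le> card {e \<in> E. v \<in> e}" by simp
  then obtain S where "S \<subseteq> {e \<in> E. v \<in> e}" "card S = 2"
    by (meson obtain_subset_with_card_n)
  then obtain e f where "e \<in> E" "f \<in> E" "v \<in> e" "v \<in> f" "e \<noteq> f"
    by (auto simp: card_2_iff)
  then show ?thesis unfolding line_edges_def by blast
qed

lemma valid_labeling_open_edge_at:
  assumes "valid_labeling E \<Lambda>" "e \<in> E" "p \<in> rc_verts E e"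
  obtains q where "q \<in> rc_edges E e" "p \<in> q" "q \<in> open_edges E \<Lambda>"
proof -
  obtain q1 q2 where q: "q1 \<in> rc_edges E e" "q2 \<in> rc_edges E e" "p \<in> q1" "p \<in> q2"
    "\<Lambda> q1 \<noteq> \<Lambda> q2" using assms unfolding valid_labeling_def by blast
  then have "q1 \<in> L2_edges E" "q2 \<in> L2_edges E" unfolding rc_edges_def by auto
  moreover from this have "\<Lambda> q1 \<in> {0, 1}" "\<Lambda> q2 \<in> {0, 1}"
    using assms(1) unfolding valid_labeling_def labeling_def by auto
  ultimately show ?thesis using q that unfolding open_edges_def by auto
qed

lemma open_edges_nonempty:
  assumes "valid_labeling E \<Lambda>" "line_edges E \<noteq> {}"
  shows "open_edges E \<Lambda> \<noteq> {}"
proof -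
  obtain p e where "p \<in> line_edges E" "e \<in> p" using assms(2) unfolding line_edges_def by blast
  moreover from this have "e \<in> E" unfolding line_edges_def by blast
  ultimately show ?thesis
    using valid_labeling_open_edge_at[OF assms(1)] unfolding rc_verts_def by blast
qed

lemma rc_edges_nonempty_imp_edge: "rc_edges E e \<noteq> {} \<Longrightarrow> e \<in> E"
  unfolding rc_edges_def L2_edges_def rc_verts_def line_edges_def by blast

lemma L2_edge_in_rc_edges:
  assumes "q \<in> L2_edges E"
  obtains e where "q \<in> rc_edges E e"
proof -
  obtain p1 p2 where p: "q = {p1, p2}" "p1 \<in> line_edges E" "p1 \<inter> p2 \<noteq> {}"
    using assms unfolding L2_edges_def line_edges_def[of "line_edges E"] by blast
  then obtain e where "e \<in> p1" "e \<in> p2" by blast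
  then have "q \<subseteq> rc_verts E e"
    using assms p unfolding L2_edges_def line_edges_def[of "line_edges E"] rc_verts_def by blast
  then show ?thesis using assms that unfolding rc_edges_def by blast
qed

lemma cycle_meets_some_clique:
  assumes "\<gamma> \<in> cycles E \<Lambda>"
  obtains e where "\<gamma> \<in> cycles_meeting E \<Lambda> e"
proof -
  obtain q where q: "q \<in> open_edges E \<Lambda>" "\<gamma> = cycle_of E \<Lambda> q"
    using assms unfolding cycles_eq_image_cycle_of by blast
  then obtain e where "q \<in> rc_edges E e"
    using L2_edge_in_rc_edges unfolding open_edges_def by blast
  then show ?thesis using q assms cycle_of_self that unfolding cycles_meeting_def by blast
qed

lemma cycles_meeting_adjacent:
  "\<gamma> \<in> cycles_meeting E \<Lambda> e \<Longrightarrow> \<phi> \<in> cycles_meeting E \<Lambda> e \<Longrightarrow> (\<gamma>, \<phi>) \<in> cycle_graph_rel E \<Lambda>"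
  using rc_edges_nonempty_imp_edge[of E e]
  unfolding cycles_meeting_def cycle_graph_rel_def cycles_adjacent_def by blast

lemma cycles_meeting_common:
  assumes "valid_labeling E \<Lambda>" "(e, f) \<in> graph_adj (line_edges E)"
  obtains \<gamma> where "\<gamma> \<in> cycles_meeting E \<Lambda> e" "\<gamma> \<in> cycles_meeting E \<Lambda> f"
proof -
  have ef: "e \<in> E" "f \<in> E" "{e, f} \<in> line_edges E"
    using assms(2) unfolding graph_adj_def line_edges_def by (auto simp: doubleton_eq_iff)
  then have "{e, f} \<in> rc_verts E e" "{e, f} \<in> rc_verts E f" unfolding rc_verts_def by auto
  then obtain q1 q2 where q: "q1 \<in> rc_edges E e" "{e, f} \<in> q1" "q1 \<in> open_edges E \<Lambda>"
    "q2 \<in> rc_edges E f" "{e, f} \<in> q2" "q2 \<in> open_edges E \<Lambda>"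
    using valid_labeling_open_edge_at[OF assms(1)] ef by metis
  then have "q2 \<in> cycle_of E \<Lambda> q1" using cycle_of_touch unfolding open_touch_def by blast
  then show ?thesis using q cycle_of_self that
    unfolding cycles_meeting_def cycles_eq_image_cycle_of by blast
qed

lemma cycles_meeting_reachable:
  assumes "valid_labeling E \<Lambda>" "(e, f) \<in> (graph_adj (line_edges E))\<^sup>*"
    and "\<gamma> \<in> cycles_meeting E \<Lambda> e" "\<phi> \<in> cycles_meeting E \<Lambda> f"
  shows "(\<gamma>, \<phi>) \<in> (cycle_graph_rel E \<Lambda>)\<^sup>*"
  using assms(2,4)
proof (induction arbitrary: \<phi> rule: rtrancl_induct)
  case base
  then show ?case using assms(3) cycles_meeting_adjacent by blast
next
  case (step g h)
  obtain \<psi> where "\<psi> \<in> cycles_meeting E \<Lambda> g" "\<psi> \<in> cycles_meeting E \<Lambda> h"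
    using cycles_meeting_common[OF assms(1) step.hyps(2)] .
  then show ?case using step.IH step.prems cycles_meeting_adjacent
    by (meson rtrancl.rtrancl_into_rtrancl)
qed

theorem lemma2p11:
  fixes V :: "'a set" and E :: "'a set set"
    and \<Lambda> :: "'a set set set \<Rightarrow> nat"
  assumes "simple_graph V E"
    and "graph_connected V E"
    and "bridgeless V E"
    and "triangle_free E"
    and "cubic V E"
    and "valid_labeling E \<Lambda>"
  shows "cycles E \<Lambda> \<noteq> {} \<and>
         (\<forall>\<gamma> \<in> cycles E \<Lambda>. \<forall>\<phi> \<in> cycles E \<Lambda>. (\<gamma>, \<phi>) \<in> (cycle_graph_rel E \<Lambda>)\<^sup>*)"
proof
  have "line_edges E \<noteq> {}"
    using cubic_line_edges_nonempty[OF assms(5)] assms(2) unfolding graph_connected_def by blast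
  then show "cycles E \<Lambda> \<noteq> {}"
    using open_edges_nonempty[OF assms(6)] unfolding cycles_eq_image_cycle_of by blast
next
  show "\<forall>\<gamma> \<in> cycles E \<Lambda>. \<forall>\<phi> \<in> cycles E \<Lambda>. (\<gamma>, \<phi>) \<in> (cycle_graph_rel E \<Lambda>)\<^sup>*"
  proof (intro ballI)
    fix \<gamma> \<phi> assume "\<gamma> \<in> cycles E \<Lambda>" "\<phi> \<in> cycles E \<Lambda>"
    then obtain e f where ef: "\<gamma> \<in> cycles_meeting E \<Lambda> e" "\<phi> \<in> cycles_meeting E \<Lambda> f"
      using cycle_meets_some_clique by metis
    then have "e \<in> E" "f \<in> E"
      using rc_edges_nonempty_imp_edge unfolding cycles_meeting_def by auto
    then have "(e, f) \<in> (graph_adj (line_edges E))\<^sup>*"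
      by (rule line_graph_connected[OF assms(1,2)])
    then show "(\<gamma>, \<phi>) \<in> (cycle_graph_rel E \<Lambda>)\<^sup>*"
      using cycles_meeting_reachable[OF assms(6)] ef by blast
  qed
qed

end
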